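(* Let $(\Theta,\mathcal H,\mathbb Q)$ be a probability space, let $g\in\mathcal H$ with $\mathbb Q(g)>0$, and let $\mathcal A$ and $\mathcal B$ be two $\mathbb Q$-independent sub-$\sigma$-fields of $\mathcal H$. Suppose that $\mathbb Q$-a.s. $\mathbb 1_g=AB$ for some $\mathcal A$-measurable $A:\Theta\to[0,\infty]$ and some $\mathcal B$-measurable $B:\Theta\to[0,\infty]$. Then there exist $a\in\mathcal A$ and $b\in\mathcal B$ such that $\mathbb Q$-a.s. $g=a\cap b$, and such $a$, $b$ are $\mathbb Q$-a.s. unique. *)

theory Defs
  imports "HOL-Probability.Probability"
begin

end

theory Submission
  imports Defs
begin

text \<open>Pointwise, \<open>1\<^sub>g = A B\<close> says that g is the intersection of the supports
  \<open>{A \<noteq> 0}\<close> and \<open>{B \<noteq> 0}\<close>, which gives existence. For uniqueness, let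
  \<open>a \<inter> b = a' \<inter> b'\<close> a.s. with positive probability. Then \<open>(a - a') \<inter> b\<close> is a null
  set whose probability is \<open>Q(a - a') Q(b)\<close> by independence, with \<open>Q(b) > 0\<close>; hence
  \<open>a \<subseteq> a'\<close> a.s., and the other three inclusions follow by symmetry.\<close>

lemma AE_indicator_eq_mult_iff_supports:
  fixes A B :: "'a \<Rightarrow> 'b :: {semiring_no_zero_divisors, zero_neq_one}"
  assumes "AE x in M. indicator g x = A x * B x"
  shows "AE x in M. (x \<in> g) = (x \<in> {y\<in>space M. A y \<noteq> 0} \<inter> {y\<in>space M. B y \<noteq> 0})"
  using assms AE_space
  by eventually_elim (auto simp: indicator_def of_bool_def split: if_splits)

lemma (in prob_space) AE_subset_cancel_indep_event:
  assumes "a \<in> events" "a' \<in> events" "b \<in> events"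
    and indep: "prob ((a - a') \<inter> b) = prob (a - a') * prob b" and "prob b > 0"
    and "AE x in M. x \<in> a \<and> x \<in> b \<longrightarrow> x \<in> a'"
  shows "AE x in M. x \<in> a \<longrightarrow> x \<in> a'"
proof -
  have "prob ((a - a') \<inter> b) = prob {}"
    by (rule finite_measure_eq_AE) (use assms in auto)
  then have "prob (a - a') = 0"
    using indep \<open>prob b > 0\<close> by simp
  then have "a - a' \<in> null_sets M"
    using assms by (simp add: null_sets_def emeasure_eq_measure)
  from AE_not_in[OF this] show ?thesis
    by eventually_elim auto
qed

lemma (in prob_space) AE_subset_cancel_indep_factor:
  assumes "subalgebra M F" "subalgebra M G"
    and indep: "\<And>x y. x \<in> sets F \<Longrightarrow> y \<in> sets G \<Longrightarrow> prob (x \<inter> y) = prob x * prob y"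
    and "a \<in> sets F" "a' \<in> sets F" "b \<in> sets G" "prob b > 0"
    and "AE x in M. x \<in> a \<and> x \<in> b \<longrightarrow> x \<in> a'"
  shows "AE x in M. x \<in> a \<longrightarrow> x \<in> a'"
proof (rule AE_subset_cancel_indep_event)
  have "sets F \<subseteq> events" "sets G \<subseteq> events"
    using assms(1,2) by (auto simp: subalgebra_def)
  then show "a \<in> events" "a' \<in> events" "b \<in> events"
    using assms(4-6) by auto
  show "prob ((a - a') \<inter> b) = prob (a - a') * prob b"
    using assms(4-6) by (intro indep) auto
qed fact+

lemma (in prob_space) AE_eq_factors_of_indep_inter:
  assumes F: "subalgebra M F" and G: "subalgebra M G"
    and indep: "indep_set (sets F) (sets G)"
    and a: "a \<in> sets F" "a' \<in> sets F" and b: "b \<in> sets G" "b' \<in> sets G"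
    and eq: "AE x in M. (x \<in> a \<inter> b) = (x \<in> a' \<inter> b')"
    and pos: "prob (a \<inter> b) > 0"
  shows "(AE x in M. (x \<in> a) = (x \<in> a')) \<and> (AE x in M. (x \<in> b) = (x \<in> b'))"
proof -
  have FG: "prob (x \<inter> y) = prob x * prob y" if "x \<in> sets F" "y \<in> sets G" for x y
    using indep_setD[OF indep that] .
  have GF: "prob (y \<inter> x) = prob y * prob x" if "y \<in> sets G" "x \<in> sets F" for x y
    using FG[OF that(2,1)] by (simp add: Int_commute mult.commute)
  have "sets F \<subseteq> events" "sets G \<subseteq> events"
    using F G by (auto simp: subalgebra_def)
  then have "prob (a \<inter> b) = prob (a' \<inter> b')"
    using a b by (intro finite_measure_eq_AE[OF eq]) auto
  then have "prob a * prob b > 0" "prob a' * prob b' > 0"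
    using pos FG a b by simp_all
  then have "prob a > 0" "prob b > 0" "prob a' > 0" "prob b' > 0"
    by (auto simp: zero_less_mult_iff)
  have "AE x in M. x \<in> a \<and> x \<in> b \<longrightarrow> x \<in> a'" "AE x in M. x \<in> a' \<and> x \<in> b' \<longrightarrow> x \<in> a"
    "AE x in M. x \<in> b \<and> x \<in> a \<longrightarrow> x \<in> b'" "AE x in M. x \<in> b' \<and> x \<in> a' \<longrightarrow> x \<in> b"
    using eq by (eventually_elim, blast)+
  then have "AE x in M. x \<in> a \<longrightarrow> x \<in> a'" "AE x in M. x \<in> a' \<longrightarrow> x \<in> a"
    "AE x in M. x \<in> b \<longrightarrow> x \<in> b'" "AE x in M. x \<in> b' \<longrightarrow> x \<in> b"
    using AE_subset_cancel_indep_factor[OF F G FG a(1,2) b(1) \<open>prob b > 0\<close>]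
      AE_subset_cancel_indep_factor[OF F G FG a(2,1) b(2) \<open>prob b' > 0\<close>]
      AE_subset_cancel_indep_factor[OF G F GF b(1,2) a(1) \<open>prob a > 0\<close>]
      AE_subset_cancel_indep_factor[OF G F GF b(2,1) a(2) \<open>prob a' > 0\<close>]
    by blast+
  then show ?thesis
    by (auto intro: AE_mp[OF _ AE_I2])
qed

theorem lemma2p1:
  fixes M F G :: "'a measure" and g :: "'a set"
    and A B :: "'a \<Rightarrow> ennreal"
  assumes "prob_space M"
    and "g \<in> sets M" and "measure M g > 0"
    and "subalgebra M F" and "subalgebra M G"
    and "prob_space.indep_set M (sets F) (sets G)"
    and "A \<in> borel_measurable F" and "B \<in> borel_measurable G"
    and "AE x in M. indicator g x = A x * B x"
  shows "\<exists>a\<in>sets F. \<exists>b\<in>sets G. (AE x in M. (x \<in> g) = (x \<in> a \<inter> b)) \<and>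
           (\<forall>a'\<in>sets F. \<forall>b'\<in>sets G. (AE x in M. (x \<in> g) = (x \<in> a' \<inter> b')) \<longrightarrow>
              (AE x in M. (x \<in> a) = (x \<in> a')) \<and> (AE x in M. (x \<in> b) = (x \<in> b')))"
proof -
  interpret prob_space M by fact
  have space: "space F = space M" "space G = space M"
    using assms(4,5) by (auto simp: subalgebra_def)
  define a where "a = {x\<in>space M. A x \<noteq> 0}"
  define b where "b = {x\<in>space M. B x \<noteq> 0}"
  have aF: "a \<in> sets F"
    unfolding a_def space(1)[symmetric] using assms(7) by measurable
  have bG: "b \<in> sets G"
    unfolding b_def space(2)[symmetric] using assms(8) by measurable
  have g_ab: "AE x in M. (x \<in> g) = (x \<in> a \<inter> b)"
    unfolding a_def b_def by (rule AE_indicator_eq_mult_iff_supports[OF assms(9)])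
  have "prob g = prob (a \<inter> b)"
    using aF bG assms(2,4,5) by (intro finite_measure_eq_AE[OF g_ab]) (auto simp: subalgebra_def)
  then have pos: "prob (a \<inter> b) > 0"
    using assms(3) by simp
  have "(AE x in M. (x \<in> a) = (x \<in> a')) \<and> (AE x in M. (x \<in> b) = (x \<in> b'))"
    if "a' \<in> sets F" "b' \<in> sets G" "AE x in M. (x \<in> g) = (x \<in> a' \<inter> b')" for a' b'
  proof (rule AE_eq_factors_of_indep_inter[OF assms(4-6) aF that(1) bG that(2) _ pos])
    show "AE x in M. (x \<in> a \<inter> b) = (x \<in> a' \<inter> b')"
      using g_ab that(3) by eventually_elim blast
  qed
  with aF bG g_ab show ?thesis
    by blast
qed

end
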